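(* Let $\mathcal O$ be the suboperad of $\mathrm{CNCB}$ generated by $a:=T_{bbb}$ and $c:=T_{buu}$. Then $\mathcal O$ admits the presentation with generators $a,c$ of arity $2$ and relations $$(c\circ_2 a)\circ_3 c = (c\circ_1 c)\circ_2 a,\qquad (a\circ_2 c)\circ_3 a=(a\circ_1 c)\circ_2 a.$$ That is, the operad morphism from the free operad on two binary generators $\alpha,\gamma$ to $\mathcal O$, sending $\alpha\mapsto a$ and $\gamma\mapsto c$, induces an isomorphism between $\mathcal O$ and the quotient of the free operad by the operadic congruence generated by $(\gamma\circ_2\alpha)\circ_3\gamma\equiv(\gamma\circ_1\gamma)\circ_2\alpha$ and $(\alpha\circ_2\gamma)\circ_3\alpha\equiv(\alpha\circ_1\gamma)\circ_2\alpha$.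
   Context: For $n\ge2$, a bicoloured noncrossing configuration (BNC) of size $n$ is a regular polygon with vertices $1,\dots,n+1$ clockwise, together with disjoint sets of blue and red arcs among the arcs $(i,j)$, $1\le i<j\le n+1$. The arcs $(i,i+1)$ are the edges ($i$th edge), $(1,n+1)$ is the base, and the others are diagonals. Coloured arcs are pairwise noncrossing ($(i,j),(k,l)$ cross iff $i<k<j<l$ or $k<i<l<j$), and red arcs are diagonals. There is one BNC of size $1$, a blue segment, which is the unit. The operad $\mathrm{CNCB}$ has the BNCs as elements (arity = size). Its composition $\mathfrak C\circ_i\mathfrak D$ ($\mathfrak C$ of size $n$, $\mathfrak D$ of size $m$) glues the base of $\mathfrak D$ on the $i$th edge of $\mathfrak C$. Arcs $(a,b)$ of $\mathfrak C$ become $(\sigma(a),\sigma(b))$ with $\sigma(v)=v$ for $v\le i$ and $v+m-1$ otherwise, and arcs $(a,b)$ of $\mathfrak D$ become $(a+i-1,b+i-1)$, keeping colours. The exception is the arc $(i,i+m)$, which is red if the $i$th edge of $\mathfrak C$ and the base of $\mathfrak D$ are both uncoloured, blue if both are blue, and uncoloured otherwise. For $x,y,z\in\{b,u\}$, $T_{xyz}$ denotes the BNC of size $2$ (a triangle with vertices $1,2,3$) whose first edge $(1,2)$ has colour $x$, whose base $(1,3)$ has colour $y$, and whose second edge $(2,3)$ has colour $z$, where $b$ = blue and $u$ = uncoloured. The suboperad generated by a set is the smallest suboperad containing it. *)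

theory Defs
  imports Main
begin

text \<open>A BNC of size n: polygon with vertices 1..n+1; arcs are pairs (i,j) with 1 <= i < j <= n+1.
  We record the size, the set of blue arcs and the set of red arcs.\<close>

record bnc =
  bsize :: nat
  blue  :: "(nat \<times> nat) set"
  red   :: "(nat \<times> nat) set"

definition arcs :: "nat \<Rightarrow> (nat \<times> nat) set" where
  "arcs n = {(i, j). 1 \<le> i \<and> i < j \<and> j \<le> n + 1}"

definition crossing :: "nat \<times> nat \<Rightarrow> nat \<times> nat \<Rightarrow> bool" where
  "crossing p q = (case p of (i, j) \<Rightarrow> case q of (k, l) \<Rightarrow>
      (i < k \<and> k < j \<and> j < l) \<or> (k < i \<and> i < l \<and> l < j))"

definition is_diagonal :: "nat \<Rightarrow> nat \<times> nat \<Rightarrow> bool" where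
  "is_diagonal n p = (p \<in> arcs n \<and> snd p \<noteq> fst p + 1 \<and> p \<noteq> (1, n + 1))"

text \<open>The elements of CNCB (not needed in the statement, recorded for reference).\<close>
definition is_bnc :: "bnc \<Rightarrow> bool" where
  "is_bnc C = ((bsize C = 1 \<and> blue C = {(1, 2)} \<and> red C = {}) \<or>
     (bsize C \<ge> 2 \<and> blue C \<subseteq> arcs (bsize C) \<and> red C \<subseteq> arcs (bsize C)
      \<and> blue C \<inter> red C = {}
      \<and> (\<forall>p\<in>red C. is_diagonal (bsize C) p)
      \<and> (\<forall>p\<in>blue C \<union> red C. \<forall>q\<in>blue C \<union> red C. \<not> crossing p q)))"

definition bnc_unit :: bnc where
  "bnc_unit = \<lparr>bsize = 1, blue = {(1, 2)}, red = {}\<rparr>"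

text \<open>Partial composition C o_i D: glue the base of D on the i-th edge of C.\<close>
definition bnc_comp :: "bnc \<Rightarrow> nat \<Rightarrow> bnc \<Rightarrow> bnc" where
  "bnc_comp C i D =
    (let n = bsize C; m = bsize D;
         \<sigma> = (\<lambda>v. if v \<le> i then v else v + m - 1);
         mapC = (\<lambda>(a, b). (\<sigma> a, \<sigma> b));
         mapD = (\<lambda>(a, b). (a + i - 1, b + i - 1));
         e = (i, i + 1); bs = (1, m + 1);
         eb = e \<in> blue C; bb = bs \<in> blue D;
         eu = (e \<notin> blue C \<and> e \<notin> red C); bu = (bs \<notin> blue D \<and> bs \<notin> red D)
     in \<lparr>bsize = n + m - 1,
         blue = mapC ` (blue C - {e}) \<union> mapD ` (blue D - {bs})
                \<union> (if eb \<and> bb then {(i, i + m)} else {}),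
         red = mapC ` (red C - {e}) \<union> mapD ` (red D - {bs})
                \<union> (if eu \<and> bu then {(i, i + m)} else {})\<rparr>)"

text \<open>T_xyz: first edge (1,2) colour x, base (1,3) colour y, second edge (2,3) colour z.\<close>
definition gen_a :: bnc where
  "gen_a = \<lparr>bsize = 2, blue = {(1, 2), (1, 3), (2, 3)}, red = {}\<rparr>"

definition gen_c :: bnc where
  "gen_c = \<lparr>bsize = 2, blue = {(1, 2)}, red = {}\<rparr>"

inductive_set subop_ac :: "bnc set" where
  unit: "bnc_unit \<in> subop_ac"
| gen_a: "gen_a \<in> subop_ac"
| gen_c: "gen_c \<in> subop_ac"
| comp: "x \<in> subop_ac \<Longrightarrow> y \<in> subop_ac \<Longrightarrow> 1 \<le> i \<Longrightarrow> i \<le> bsize x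
          \<Longrightarrow> bnc_comp x i y \<in> subop_ac"

datatype gen = Alpha | Gamma

text \<open>Elements of the free operad: planar binary trees with internal nodes labelled by
  generators; Leaf is the unit (arity 1).\<close>
datatype ftree = Leaf | Node gen ftree ftree

fun arity :: "ftree \<Rightarrow> nat" where
  "arity Leaf = 1"
| "arity (Node g l r) = arity l + arity r"

fun graft :: "ftree \<Rightarrow> nat \<Rightarrow> ftree \<Rightarrow> ftree" where
  "graft Leaf i t = t"
| "graft (Node g l r) i t =
     (if i \<le> arity l then Node g (graft l i t) r else Node g l (graft r (i - arity l) t))"

definition alpha :: ftree where "alpha = Node Alpha Leaf Leaf"
definition gamma :: ftree where "gamma = Node Gamma Leaf Leaf"

inductive fcong :: "ftree \<Rightarrow> ftree \<Rightarrow> bool" where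
  rel1: "fcong (graft (graft gamma 2 alpha) 3 gamma) (graft (graft gamma 1 gamma) 2 alpha)"
| rel2: "fcong (graft (graft alpha 2 gamma) 3 alpha) (graft (graft alpha 1 gamma) 2 alpha)"
| refl: "fcong s s"
| sym: "fcong s t \<Longrightarrow> fcong t s"
| trans: "fcong s t \<Longrightarrow> fcong t u \<Longrightarrow> fcong s u"
| comp: "fcong s s' \<Longrightarrow> fcong t t' \<Longrightarrow> 1 \<le> i \<Longrightarrow> i \<le> arity s \<Longrightarrow> i \<le> arity s'
          \<Longrightarrow> fcong (graft s i t) (graft s' i t')"

fun gen_val :: "gen \<Rightarrow> bnc" where
  "gen_val Alpha = gen_a"
| "gen_val Gamma = gen_c"

fun eval :: "ftree \<Rightarrow> bnc" where
  "eval Leaf = bnc_unit"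
| "eval (Node g l r) = bnc_comp (bnc_comp (gen_val g) 2 (eval r)) 1 (eval l)"

end

theory Submission
  imports Defs
begin

text \<open>
  Evaluating a tree gives the triangulation of the polygon dual to it: the subtree whose leftmost
  vertex is \<open>q\<close> spans the arc \<open>(q, q + arity)\<close>, which is blue if the subtree is a leaf or
  \<open>\<alpha>\<close>-rooted and not the right child of a \<open>\<gamma>\<close>-node, red if it is a \<open>\<gamma>\<close>-rooted right child
  of a \<open>\<gamma>\<close>-node, and uncoloured otherwise. This description is compatible with grafting, so
  \<open>eval\<close> is a morphism onto the generated suboperad, and both relations hold in CNCB.

  Conversely, the relations read from right to left rewrite \<open>g(\<gamma>(x, \<alpha>(y, z)), w)\<close> into
  \<open>g(x, g'(y, g(z, w)))\<close>, with \<open>g'\<close> the other generator, so every tree is congruent to a normal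
  one, in which no left child has the shape \<open>\<gamma>(x, \<alpha>(y, z))\<close>. A normal tree can be read off its
  configuration: the uncoloured arcs at the top of the tree merge with the base into a single face,
  the blue arcs on the boundary of this face locate the root split, and the two subtrees are then
  recovered by induction.
\<close>

datatype colour = Blue | Red

fun gamma_rooted :: "ftree \<Rightarrow> bool" where
  "gamma_rooted (Node g l r) = (g = Gamma)"
| "gamma_rooted Leaf = False"

text \<open>The flag \<open>rg\<close> records whether a subtree is the right child of a \<open>\<gamma>\<close>-node.\<close>
fun span_coloured :: "colour \<Rightarrow> bool \<Rightarrow> ftree \<Rightarrow> bool" where
  "span_coloured Blue rg t = (\<not> rg \<and> \<not> gamma_rooted t)"
| "span_coloured Red rg t = (rg \<and> gamma_rooted t)"

fun tree_arcs :: "colour \<Rightarrow> bool \<Rightarrow> nat \<Rightarrow> ftree \<Rightarrow> (nat \<times> nat) set" where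
  "tree_arcs c rg q Leaf = (if span_coloured c rg Leaf then {(q, Suc q)} else {})"
| "tree_arcs c rg q (Node g l r) =
     (if span_coloured c rg (Node g l r) then {(q, q + arity l + arity r)} else {})
     \<union> tree_arcs c False q l \<union> tree_arcs c (g = Gamma) (q + arity l) r"

definition tree_bnc :: "ftree \<Rightarrow> bnc" where
  "tree_bnc t = \<lparr>bsize = arity t, blue = tree_arcs Blue False 1 t, red = tree_arcs Red False 1 t\<rparr>"

lemma arity_ge_1: "1 \<le> arity t"
  by (induction t) auto

lemma arity_eq_1_iff: "arity t = 1 \<longleftrightarrow> t = Leaf"
proof (cases t)
  case (Node g l r)
  then show ?thesis using arity_ge_1[of l] arity_ge_1[of r] by simp
qed simp

lemma tree_arcs_bounds: "(a, b) \<in> tree_arcs c rg q t \<Longrightarrow> q \<le> a \<and> a < b \<and> b \<le> q + arity t"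
proof (induction t arbitrary: rg q)
  case (Node g l r)
  with arity_ge_1[of l] arity_ge_1[of r] show ?case by (fastforce split: if_splits)
qed (auto split: if_splits)

lemma span_notin_tree_arcs_children:
  "(q, q + arity l + arity r) \<notin> tree_arcs c rg q l"
  "(q, q + arity l + arity r) \<notin> tree_arcs c rg' (q + arity l) r"
  using arity_ge_1[of l] arity_ge_1[of r]
    tree_arcs_bounds[of q "q + arity l + arity r" c rg q l]
    tree_arcs_bounds[of q "q + arity l + arity r" c rg' "q + arity l" r]
  by auto

lemma span_in_tree_arcs_iff: "(q, q + arity t) \<in> tree_arcs c rg q t \<longleftrightarrow> span_coloured c rg t"
  using span_notin_tree_arcs_children by (cases t) (auto simp: add.assoc)

lemma tree_arcs_change_rg:
  "tree_arcs c rg q t = (tree_arcs c rg' q t - {(q, q + arity t)})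
     \<union> (if span_coloured c rg t then {(q, q + arity t)} else {})"
  using span_notin_tree_arcs_children by (cases t) (auto simp: add.assoc)

definition shift_arc :: "nat \<Rightarrow> nat \<times> nat \<Rightarrow> nat \<times> nat" where
  "shift_arc d p = (fst p + d, snd p + d)"

lemma inj_shift_arc: "inj (shift_arc d)"
  by (auto simp: inj_on_def shift_arc_def prod_eq_iff)

lemma tree_arcs_shift: "tree_arcs c rg (q + d) t = shift_arc d ` tree_arcs c rg q t"
proof (induction t arbitrary: rg q)
  case (Node g l r)
  have e: "q + d + arity l = (q + arity l) + d" by simp
  show ?case unfolding tree_arcs.simps image_Un e Node.IH by (auto simp: shift_arc_def)
qed (auto simp: shift_arc_def)

text \<open>The vertex map of \<open>bnc_comp\<close>.\<close>
definition expand_arc :: "nat \<Rightarrow> nat \<Rightarrow> nat \<times> nat \<Rightarrow> nat \<times> nat" where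
  "expand_arc k m p =
     (if fst p \<le> k then fst p else fst p + m - 1, if snd p \<le> k then snd p else snd p + m - 1)"

lemma expand_arc_image_below:
  assumes "\<And>a b. (a, b) \<in> A \<Longrightarrow> a < b \<and> b \<le> k"
  shows "expand_arc k m ` A = A"
proof -
  have "expand_arc k m ` A = id ` A"
    using assms by (intro image_cong) (fastforce simp: expand_arc_def)+
  then show ?thesis by simp
qed

lemma expand_arc_image_above:
  assumes "\<And>a b. (a, b) \<in> A \<Longrightarrow> k < a \<and> a < b" "1 \<le> m"
  shows "expand_arc k m ` A = shift_arc (m - 1) ` A"
  using assms by (intro image_cong) (fastforce simp: expand_arc_def shift_arc_def)+

fun leaf_rg :: "bool \<Rightarrow> ftree \<Rightarrow> nat \<Rightarrow> bool" where
  "leaf_rg rg Leaf i = rg"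
| "leaf_rg rg (Node g l r) i =
     (if i \<le> arity l then leaf_rg False l i else leaf_rg (g = Gamma) r (i - arity l))"

lemma arity_graft: "1 \<le> i \<Longrightarrow> i \<le> arity s \<Longrightarrow> arity (graft s i t) = arity s + arity t - 1"
proof (induction s arbitrary: i)
  case (Node g l r)
  with arity_ge_1[of l] arity_ge_1[of r] arity_ge_1[of t] show ?case by auto
qed simp

lemma span_coloured_Node:
  "span_coloured c rg (Node g l r) = (case c of Blue \<Rightarrow> \<not> rg \<and> g = Alpha | Red \<Rightarrow> rg \<and> g = Gamma)"
  by (cases c; cases g) auto

lemma tree_arcs_graft:
  assumes "1 \<le> i" "i \<le> arity s"
  shows "tree_arcs c rg q (graft s i t) =
     expand_arc (q + i - 1) (arity t) ` (tree_arcs c rg q s - {(q + i - 1, q + i)})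
     \<union> tree_arcs c (leaf_rg rg s i) (q + i - 1) t"
  using assms
proof (induction s arbitrary: i rg q)
  case Leaf
  then show ?case by (cases c) auto
next
  case (Node g l r)
  define f where "f = expand_arc (q + i - 1) (arity t)"
  define e where "e = (q + i - 1, q + i)"
  define span where "span m = (if span_coloured c rg (Node g l r) then {(q, q + m)} else {})" for m
  define R where "R = tree_arcs c (g = Gamma) (q + arity l) r"
  have al: "1 \<le> arity l" and ar: "1 \<le> arity r" and at: "1 \<le> arity t" by (rule arity_ge_1)+
  have node: "tree_arcs c rg q (Node g l r) - {e} =
      span (arity l + arity r) \<union> (tree_arcs c False q l - {e}) \<union> (R - {e})"
    using Node.prems al ar by (auto simp: span_def e_def R_def)
  have f_span: "f ` span (arity l + arity r) = span (arity l + arity r + arity t - 1)"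
    using Node.prems al ar at by (auto simp: span_def f_def expand_arc_def)
  show ?case
  proof (cases "i \<le> arity l")
    case True
    have ag: "arity (graft l i t) = arity l + arity t - 1" using arity_graft[OF Node.prems(1) True] .
    have "e \<notin> R"
      using tree_arcs_bounds[of "q + i - 1" "q + i" c "g = Gamma" "q + arity l" r] True Node.prems
      by (auto simp: e_def R_def)
    moreover have "f ` R = tree_arcs c (g = Gamma) (q + arity (graft l i t)) r"
    proof -
      have "f ` R = shift_arc (arity t - 1) ` R"
        unfolding f_def using True Node.prems at
        by (intro expand_arc_image_above) (auto simp: R_def dest: tree_arcs_bounds)
      also have "\<dots> = tree_arcs c (g = Gamma) (q + arity (graft l i t)) r"
        using tree_arcs_shift[of c "g = Gamma" "q + arity l" "arity t - 1" r] ag at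
        by (simp add: R_def add.assoc)
      finally show ?thesis .
    qed
    ultimately have "f ` (tree_arcs c rg q (Node g l r) - {e}) =
        span (arity l + arity r + arity t - 1) \<union> f ` (tree_arcs c False q l - {e})
        \<union> tree_arcs c (g = Gamma) (q + arity (graft l i t)) r"
      unfolding node image_Un f_span by simp
    moreover have "tree_arcs c rg q (graft (Node g l r) i t) =
        span (arity l + arity r + arity t - 1) \<union> tree_arcs c False q (graft l i t)
        \<union> tree_arcs c (g = Gamma) (q + arity (graft l i t)) r"
      using True ag al at by (simp add: span_def span_coloured_Node ac_simps)
    ultimately show ?thesis
      using Node.IH(1)[OF Node.prems(1) True, of False q] True by (auto simp: f_def e_def)
  next
    case False
    define j where "j = i - arity l"
    have j: "1 \<le> j" "j \<le> arity r" "q + arity l + j - 1 = q + i - 1" "q + arity l + j = q + i"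
      using False Node.prems by (auto simp: j_def)
    have ag: "arity (graft r j t) = arity r + arity t - 1" using arity_graft[OF j(1,2)] .
    have "e \<notin> tree_arcs c False q l"
      using tree_arcs_bounds[of "q + i - 1" "q + i" c False q l] False by (auto simp: e_def)
    moreover have "f ` tree_arcs c False q l = tree_arcs c False q l"
      unfolding f_def using False by (intro expand_arc_image_below) (auto dest: tree_arcs_bounds)
    ultimately have "f ` (tree_arcs c rg q (Node g l r) - {e}) =
        span (arity l + arity r + arity t - 1) \<union> tree_arcs c False q l \<union> f ` (R - {e})"
      unfolding node image_Un f_span by simp
    moreover have "tree_arcs c rg q (graft (Node g l r) i t) =
        span (arity l + arity r + arity t - 1) \<union> tree_arcs c False q l
        \<union> tree_arcs c (g = Gamma) (q + arity l) (graft r j t)"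
      using False ag ar at by (simp add: span_def span_coloured_Node j_def ac_simps)
    ultimately show ?thesis
      using Node.IH(2)[OF j(1,2), of "g = Gamma" "q + arity l"] False j(3,4)
      by (auto simp: f_def e_def R_def j_def)
  qed
qed

lemma leaf_arc_in_tree_arcs_iff:
  assumes "1 \<le> i" "i \<le> arity s"
  shows "(q + i - 1, q + i) \<in> tree_arcs c rg q s \<longleftrightarrow> span_coloured c (leaf_rg rg s i) Leaf"
  using assms
proof (induction s arbitrary: i rg q)
  case Leaf
  then show ?case by (cases c) auto
next
  case (Node g l r)
  have al: "1 \<le> arity l" and ar: "1 \<le> arity r" by (rule arity_ge_1)+
  show ?case
  proof (cases "i \<le> arity l")
    case True
    then show ?thesis
      using Node.IH(1)[OF Node.prems(1) True, where rg=False and q=q] Node.prems al ar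
        tree_arcs_bounds[of "q + i - 1" "q + i" c "g = Gamma" "q + arity l" r]
      by auto
  next
    case False
    define j where "j = i - arity l"
    have j: "1 \<le> j" "j \<le> arity r" "q + arity l + j - 1 = q + i - 1" "q + arity l + j = q + i"
      using False Node.prems by (auto simp: j_def)
    show ?thesis
      using Node.IH(2)[OF j(1,2), where rg="g = Gamma" and q="q + arity l"] False j(3,4) al ar
        tree_arcs_bounds[of "q + i - 1" "q + i" c False q l]
      by (auto simp: j_def)
  qed
qed

lemma tree_arcs_graft_root:
  assumes "1 \<le> i" "i \<le> arity s"
  shows "tree_arcs c False 1 (graft s i t) =
     expand_arc i (arity t) ` (tree_arcs c False 1 s - {(i, i + 1)})
     \<union> shift_arc (i - 1) ` (tree_arcs c False 1 t - {(1, arity t + 1)})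
     \<union> (if span_coloured c (leaf_rg False s i) t then {(i, i + arity t)} else {})"
proof -
  have "tree_arcs c (leaf_rg False s i) (1 + (i - 1)) t =
      shift_arc (i - 1) ` ((tree_arcs c False 1 t - {(1, 1 + arity t)})
        \<union> (if span_coloured c (leaf_rg False s i) t then {(1, 1 + arity t)} else {}))"
    unfolding tree_arcs_shift tree_arcs_change_rg[of c "leaf_rg False s i" 1 t False] ..
  then show ?thesis
    using tree_arcs_graft[OF assms, of c False 1 t] assms
    by (simp add: image_Un shift_arc_def add.commute)
qed

lemma tree_bnc_graft:
  assumes "1 \<le> i" "i \<le> arity s"
  shows "tree_bnc (graft s i t) = bnc_comp (tree_bnc s) i (tree_bnc t)"
proof -
  let ?L = "leaf_rg False s i"
  have leaf_edge: "(i, i + 1) \<in> tree_arcs c False 1 s \<longleftrightarrow> span_coloured c ?L Leaf" for c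
    using leaf_arc_in_tree_arcs_iff[OF assms, where q=1 and c=c and rg=False] by (simp add: add.commute)
  have base: "(1, arity t + 1) \<in> tree_arcs c False 1 t \<longleftrightarrow> span_coloured c False t" for c
    using span_in_tree_arcs_iff[of 1 t c False] by (simp add: add.commute)
  have "expand_arc i (arity t) = (\<lambda>(a, b). ((\<lambda>v. if v \<le> i then v else v + arity t - 1) a,
                                          (\<lambda>v. if v \<le> i then v else v + arity t - 1) b))"
    by (auto simp: expand_arc_def)
  moreover have "shift_arc (i - 1) = (\<lambda>(a, b). (a + i - 1, b + i - 1))"
    using assms by (auto simp: shift_arc_def)
  moreover have "span_coloured Blue ?L t \<longleftrightarrow>
      (i, i + 1) \<in> tree_arcs Blue False 1 s \<and> (1, arity t + 1) \<in> tree_arcs Blue False 1 t"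
    using leaf_edge[of Blue] base[of Blue] by simp
  moreover have "span_coloured Red ?L t \<longleftrightarrow>
      ((i, i + 1) \<notin> tree_arcs Blue False 1 s \<and> (i, i + 1) \<notin> tree_arcs Red False 1 s) \<and>
      ((1, arity t + 1) \<notin> tree_arcs Blue False 1 t \<and> (1, arity t + 1) \<notin> tree_arcs Red False 1 t)"
    using leaf_edge base by simp
  ultimately show ?thesis
    unfolding tree_bnc_def bnc_comp_def Let_def bnc.simps
    by (simp only: tree_arcs_graft_root[OF assms] arity_graft[OF assms])
qed

lemma gen_val_eq_tree_bnc: "gen_val g = tree_bnc (Node g Leaf Leaf)"
  by (cases g) (auto simp: tree_bnc_def gen_a_def gen_c_def)

lemma eval_eq_tree_bnc: "eval t = tree_bnc t"
proof (induction t)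
  case Leaf
  show ?case by (simp add: tree_bnc_def bnc_unit_def)
next
  case (Node g l r)
  have "eval (Node g l r) = bnc_comp (bnc_comp (tree_bnc (Node g Leaf Leaf)) 2 (tree_bnc r)) 1 (tree_bnc l)"
    using Node gen_val_eq_tree_bnc by simp
  also have "\<dots> = bnc_comp (tree_bnc (graft (Node g Leaf Leaf) 2 r)) 1 (tree_bnc l)"
    by (subst tree_bnc_graft) auto
  also have "\<dots> = tree_bnc (graft (graft (Node g Leaf Leaf) 2 r) 1 l)"
    by (subst tree_bnc_graft) (auto simp: arity_ge_1)
  finally show ?case by simp
qed

lemma eval_graft: "1 \<le> i \<Longrightarrow> i \<le> arity s \<Longrightarrow> eval (graft s i t) = bnc_comp (eval s) i (eval t)"
  by (simp add: eval_eq_tree_bnc tree_bnc_graft)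

lemma bsize_eval: "bsize (eval t) = arity t"
  by (simp add: eval_eq_tree_bnc tree_bnc_def)

lemma eval_generator: "eval (Node g Leaf Leaf) = gen_val g"
  by (simp add: eval_eq_tree_bnc gen_val_eq_tree_bnc)

lemma eval_in_subop_ac: "eval t \<in> subop_ac"
proof (induction t)
  case Leaf
  show ?case by (simp add: subop_ac.unit)
next
  case (Node g l r)
  have gen: "gen_val g \<in> subop_ac" by (cases g) (simp_all add: subop_ac.gen_a subop_ac.gen_c)
  have bsize_gen: "bsize (gen_val g) = 2" by (cases g) (simp_all add: gen_a_def gen_c_def)
  then have "bnc_comp (gen_val g) 2 (eval r) \<in> subop_ac"
    using subop_ac.comp[OF gen Node(2)] by simp
  moreover have "1 \<le> bsize (bnc_comp (gen_val g) 2 (eval r))"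
    by (simp add: bnc_comp_def Let_def bsize_gen)
  ultimately show ?case using subop_ac.comp[OF _ Node(1)] by simp
qed

lemma range_eval: "range eval = subop_ac"
proof
  show "range eval \<subseteq> subop_ac" using eval_in_subop_ac by blast
next
  show "subop_ac \<subseteq> range eval"
  proof
    fix x assume "x \<in> subop_ac"
    then show "x \<in> range eval"
    proof (induction rule: subop_ac.induct)
      case unit
      show ?case using eval.simps(1) by (metis rangeI)
    next
      case gen_a
      show ?case using eval_generator[of Alpha] by (metis gen_val.simps(1) rangeI)
    next
      case gen_c
      show ?case using eval_generator[of Gamma] by (metis gen_val.simps(2) rangeI)
    next
      case (comp x y i)
      then obtain s t where "x = eval s" "y = eval t" by auto
      with comp have "eval (graft s i t) = bnc_comp x i y" by (simp add: eval_graft bsize_eval)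
      then show ?case by (metis rangeI)
    qed
  qed
qed

lemma fcong_arity: "fcong s t \<Longrightarrow> arity s = arity t"
proof (induction rule: fcong.induct)
  case (comp s s' t t' i)
  then show ?case using arity_graft[of i s t] arity_graft[of i s' t'] by simp
qed (auto simp: alpha_def gamma_def)

lemma eval_eq_if_fcong: "fcong s t \<Longrightarrow> eval s = eval t"
proof (induction rule: fcong.induct)
  case (comp s s' t t' i)
  then show ?case by (simp add: eval_graft)
qed (simp_all add: eval_eq_tree_bnc tree_bnc_def alpha_def gamma_def insert_commute)

fun is_gamma_alpha :: "ftree \<Rightarrow> bool" where
  "is_gamma_alpha (Node Gamma x (Node Alpha y z)) = True"
| "is_gamma_alpha _ = False"

fun normal :: "ftree \<Rightarrow> bool" where
  "normal Leaf = True"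
| "normal (Node g l r) = (normal l \<and> normal r \<and> \<not> is_gamma_alpha l)"

declare fcong.trans[trans]

lemma fcong_graft_left: "fcong s s' \<Longrightarrow> 1 \<le> i \<Longrightarrow> i \<le> arity s \<Longrightarrow> fcong (graft s i t) (graft s' i t)"
  using fcong.comp[OF _ fcong.refl] fcong_arity by simp

lemma fcong_Node: "fcong l l' \<Longrightarrow> fcong r r' \<Longrightarrow> fcong (Node g l r) (Node g l' r')"
proof -
  assume l: "fcong l l'" and r: "fcong r r'"
  have "fcong (graft (Node g Leaf Leaf) 2 r) (graft (Node g Leaf Leaf) 2 r')"
    using fcong.comp[OF fcong.refl r, of 2 "Node g Leaf Leaf"] by simp
  then have "fcong (graft (Node g Leaf r) 1 l) (graft (Node g Leaf r') 1 l')"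
    using fcong.comp[OF _ l, where s = "Node g Leaf r" and s' = "Node g Leaf r'" and i = 1] by simp
  then show ?thesis by simp
qed

lemma fcong_graft4:
  assumes "fcong s s'" "arity s = 4"
  shows "fcong (graft (graft (graft (graft s 4 w) 3 z) 2 y) 1 x)
               (graft (graft (graft (graft s' 4 w) 3 z) 2 y) 1 x)"
proof -
  have "1 \<le> arity w" "1 \<le> arity z" "1 \<le> arity y" by (rule arity_ge_1)+
  with assms show ?thesis
    by (intro fcong_graft_left) (simp_all add: arity_graft)
qed

text \<open>Both defining relations, read from right to left, as one rewrite rule.\<close>
lemma fcong_rotate:
  "fcong (Node g (Node Gamma x (Node Alpha y z)) w)
         (Node g x (Node (if g = Alpha then Gamma else Alpha) y (Node g z w)))"
proof (cases g)
  case Alpha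
  from fcong_graft4[OF fcong.sym[OF fcong.rel2], of w z y x] Alpha show ?thesis
    by (simp add: alpha_def gamma_def)
next
  case Gamma
  from fcong_graft4[OF fcong.sym[OF fcong.rel1], of w z y x] Gamma show ?thesis
    by (simp add: alpha_def gamma_def)
qed

lemma normal_form_Node:
  assumes "normal l" "normal r"
  shows "\<exists>n. normal n \<and> fcong (Node g l r) n"
  using assms
proof (induction "size l" arbitrary: l r g rule: less_induct)
  case less
  show ?case
  proof (cases "is_gamma_alpha l")
    case False
    with less.prems have "normal (Node g l r)" by simp
    then show ?thesis using fcong.refl by blast
  next
    case True
    then obtain x y z where l: "l = Node Gamma x (Node Alpha y z)"
      by (cases l rule: is_gamma_alpha.cases) auto
    let ?g' = "if g = Alpha then Gamma else Alpha"
    obtain n1 where n1: "normal n1" "fcong (Node g z r) n1"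
      using less.hyps[of z r g] less.prems l by auto
    obtain n2 where n2: "normal n2" "fcong (Node ?g' y n1) n2"
      using less.hyps[of y n1 ?g'] less.prems n1(1) l by auto
    obtain n3 where n3: "normal n3" "fcong (Node g x n2) n3"
      using less.hyps[of x n2 g] less.prems n2(1) l by auto
    have "fcong (Node g l r) (Node g x (Node ?g' y (Node g z r)))"
      unfolding l by (rule fcong_rotate)
    also have "fcong \<dots> (Node g x (Node ?g' y n1))"
      by (intro fcong_Node fcong.refl n1(2))
    also have "fcong \<dots> (Node g x n2)"
      by (intro fcong_Node fcong.refl n2(2))
    also note n3(2)
    finally show ?thesis using n3(1) by blast
  qed
qed

lemma normal_form: "\<exists>n. normal n \<and> fcong t n"
proof (induction t)
  case Leaf
  show ?case using fcong.refl normal.simps(1) by blast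
next
  case (Node g l r)
  then obtain nl nr where "normal nl" "fcong l nl" "normal nr" "fcong r nr" by blast
  moreover obtain n where "normal n" "fcong (Node g nl nr) n"
    using normal_form_Node calculation by blast
  ultimately show ?case using fcong_Node fcong.trans by blast
qed

definition covered :: "(nat \<times> nat) set \<Rightarrow> nat \<Rightarrow> bool" where
  "covered A v = (\<exists>(a, b)\<in>A. a < v \<and> v < b)"

definition visible_arcs :: "bool \<Rightarrow> nat \<Rightarrow> ftree \<Rightarrow> (nat \<times> nat) set" where
  "visible_arcs rg q t = tree_arcs Blue rg q t \<union> tree_arcs Red rg q t"

text \<open>For a node, \<open>rg = (g = Alpha)\<close> says exactly that its span is uncoloured.\<close>
fun top_splits :: "bool \<Rightarrow> nat \<Rightarrow> ftree \<Rightarrow> nat set" where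
  "top_splits rg q Leaf = {}"
| "top_splits rg q (Node g l r) =
     (if rg = (g = Alpha)
      then top_splits False q l \<union> {q + arity l} \<union> top_splits (g = Gamma) (q + arity l) r
      else {})"

fun blue_starts :: "bool \<Rightarrow> nat \<Rightarrow> ftree \<Rightarrow> nat set" where
  "blue_starts rg q Leaf = (if rg then {} else {q})"
| "blue_starts rg q (Node g l r) =
     (if rg = (g = Alpha)
      then blue_starts False q l \<union> blue_starts (g = Gamma) (q + arity l) r
      else if rg then {} else {q})"

lemma top_splits_bounds: "v \<in> top_splits rg q t \<Longrightarrow> q < v \<and> v < q + arity t"
proof (induction t arbitrary: rg q)
  case (Node g l r)
  with arity_ge_1[of l] arity_ge_1[of r] show ?case by (fastforce split: if_splits)
qed simp

lemma finite_top_splits: "finite (top_splits rg q t)"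
  by (induction t arbitrary: rg q) auto

lemma visible_arcs_bounds: "(a, b) \<in> visible_arcs rg q t \<Longrightarrow> q \<le> a \<and> a < b \<and> b \<le> q + arity t"
  unfolding visible_arcs_def using tree_arcs_bounds by blast

lemma visible_arcs_Node:
  "rg = (g = Alpha) \<Longrightarrow>
     visible_arcs rg q (Node g l r) = visible_arcs False q l \<union> visible_arcs (g = Gamma) (q + arity l) r"
  by (cases g) (auto simp: visible_arcs_def)

lemma not_covered_iff_top_split:
  assumes "q < v" "v < q + arity t"
  shows "\<not> covered (visible_arcs rg q t) v \<longleftrightarrow> v \<in> top_splits rg q t"
  using assms
proof (induction t arbitrary: rg q)
  case Leaf
  then show ?case by simp
next
  case (Node g l r)
  show ?case
  proof (cases "rg = (g = Alpha)")
    case False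
    then have "(q, q + arity (Node g l r)) \<in> visible_arcs rg q (Node g l r)"
      using span_in_tree_arcs_iff[of q "Node g l r" _ rg] by (cases g) (auto simp: visible_arcs_def)
    then show ?thesis using False Node.prems by (force simp: covered_def)
  next
    case True
    let ?k = "q + arity l"
    have left: "covered (visible_arcs False q l) v \<Longrightarrow> v < ?k"
      and right: "covered (visible_arcs (g = Gamma) ?k r) v \<Longrightarrow> ?k < v"
      unfolding covered_def using visible_arcs_bounds by fastforce+
    have split: "top_splits rg q (Node g l r) = top_splits False q l \<union> {?k} \<union> top_splits (g = Gamma) ?k r"
      using True by simp
    have "v < ?k \<or> v = ?k \<or> ?k < v" by linarith
    then show ?thesis
    proof (elim disjE)
      assume "v < ?k"
      then show ?thesis
        using Node.IH(1)[where rg=False and q=q] Node.prems right top_splits_bounds[of v "g = Gamma" ?k r]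
        unfolding visible_arcs_Node[OF True] split by (auto simp: covered_def)
    next
      assume "v = ?k"
      then show ?thesis
        using left right unfolding visible_arcs_Node[OF True] split by (auto simp: covered_def)
    next
      assume "?k < v"
      then show ?thesis
        using Node.IH(2)[where rg="g = Gamma" and q="?k"] Node.prems left top_splits_bounds[of v False q l]
        unfolding visible_arcs_Node[OF True] split by (auto simp: covered_def)
    qed
  qed
qed

definition face_blue_arcs :: "bool \<Rightarrow> nat \<Rightarrow> ftree \<Rightarrow> (nat \<times> nat) set" where
  "face_blue_arcs rg q t = {(v, w) \<in> tree_arcs Blue rg q t.
     v \<in> insert q (top_splits rg q t) \<and> w \<in> insert (q + arity t) (top_splits rg q t)}"

lemma face_blue_arcs_Node:
  assumes "rg = (g = Alpha)"
  shows "face_blue_arcs rg q (Node g l r) =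
     face_blue_arcs False q l \<union> face_blue_arcs (g = Gamma) (q + arity l) r"
proof -
  let ?k = "q + arity l" and ?e = "q + arity (Node g l r)"
  let ?Tl = "top_splits False q l" and ?Tr = "top_splits (g = Gamma) ?k r"
  have arcs: "tree_arcs Blue rg q (Node g l r) = tree_arcs Blue False q l \<union> tree_arcs Blue (g = Gamma) ?k r"
    using assms by (cases g) auto
  have T: "top_splits rg q (Node g l r) = ?Tl \<union> {?k} \<union> ?Tr"
    using assms by simp
  have k: "q < ?k" "?k < ?e" using arity_ge_1[of l] arity_ge_1[of r] by simp_all
  have left: "v \<in> insert q (top_splits rg q (Node g l r)) \<longleftrightarrow> v \<in> insert q ?Tl"
    "w \<in> insert ?e (top_splits rg q (Node g l r)) \<longleftrightarrow> w \<in> insert ?k ?Tl"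
    if "(v, w) \<in> tree_arcs Blue False q l" for v w
    using tree_arcs_bounds[OF that] top_splits_bounds[of v "g = Gamma" ?k r]
      top_splits_bounds[of w "g = Gamma" ?k r] k
    unfolding T by auto
  have right: "v \<in> insert q (top_splits rg q (Node g l r)) \<longleftrightarrow> v \<in> insert ?k ?Tr"
    "w \<in> insert ?e (top_splits rg q (Node g l r)) \<longleftrightarrow> w \<in> insert (?k + arity r) ?Tr"
    if "(v, w) \<in> tree_arcs Blue (g = Gamma) ?k r" for v w
    using tree_arcs_bounds[OF that] top_splits_bounds[of v False q l] top_splits_bounds[of w False q l] k
    unfolding T by (auto simp: add.assoc)
  have "(v, w) \<in> face_blue_arcs rg q (Node g l r) \<longleftrightarrow>
      (v, w) \<in> face_blue_arcs False q l \<or> (v, w) \<in> face_blue_arcs (g = Gamma) ?k r" for v w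
    unfolding face_blue_arcs_def arcs mem_Collect_eq case_prod_conv Un_iff
    using left[of v w] right[of v w] by blast
  then show ?thesis by auto
qed

lemma face_blue_arcs_starts: "fst ` face_blue_arcs rg q t = blue_starts rg q t"
proof (induction t arbitrary: rg q)
  case Leaf
  then show ?case by (auto simp: face_blue_arcs_def)
next
  case (Node g l r)
  show ?case
  proof (cases "rg = (g = Alpha)")
    case True
    then show ?thesis by (simp add: face_blue_arcs_Node image_Un Node.IH)
  next
    case False
    then have "face_blue_arcs rg q (Node g l r) =
        (if span_coloured Blue rg (Node g l r) then {(q, q + arity (Node g l r))} else {})"
      using span_in_tree_arcs_iff[of q "Node g l r" Blue rg]
      by (auto simp: face_blue_arcs_def simp del: arity.simps tree_arcs.simps)
    then show ?thesis using False by auto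
  qed
qed

lemma blue_starts_subset: "blue_starts rg q t \<subseteq> insert q (top_splits rg q t)"
  unfolding face_blue_arcs_starts[symmetric] face_blue_arcs_def by auto

lemma blue_starts_left: "q \<in> blue_starts False q t"
  by (induction t arbitrary: q) auto

lemma blue_starts_if_top_splits: "top_splits rg q t \<noteq> {} \<Longrightarrow> q \<in> blue_starts rg q t"
  by (cases t) (auto simp: blue_starts_left split: if_splits)

lemma blue_starts_normal: "normal t \<Longrightarrow> \<not> is_gamma_alpha t \<Longrightarrow> blue_starts False q t \<subseteq> {q}"
proof (induction t arbitrary: q)
  case (Node g l r)
  show ?case
  proof (cases g)
    case Gamma
    then have "blue_starts True (q + arity l) r = {}"
      using Node.prems by (cases r rule: is_gamma_alpha.cases) auto
    with Gamma Node show ?thesis by simp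
  qed simp
qed simp

text \<open>The vertices of the face of a configuration that contains the base, apart from the
  endpoints of the base.\<close>
definition base_face :: "bnc \<Rightarrow> nat set" where
  "base_face C = {v. 1 < v \<and> v < bsize C + 1 \<and> \<not> covered (blue C \<union> red C - {(1, bsize C + 1)}) v}"

definition face_blue_start :: "bnc \<Rightarrow> nat \<Rightarrow> bool" where
  "face_blue_start C v =
     (v \<in> base_face C \<and> (\<exists>w. (v, w) \<in> blue C \<and> w \<in> insert (bsize C + 1) (base_face C)))"

text \<open>In a normal tree the only blue boundary arc of the base face lying over the left subtree
  starts at vertex 1. So the root split is the first face vertex starting a blue boundary arc,
  and if there is none, the right subtree lies entirely below the face and the root split is its
  last vertex.\<close>
definition root_split :: "bnc \<Rightarrow> nat" where
  "root_split C = (if \<exists>v. face_blue_start C v then LEAST v. face_blue_start C v else Max (base_face C))"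

lemma tree_arcs_without_base:
  assumes "s = Node g l r"
  shows "tree_arcs c False 1 s - {(1, arity s + 1)} = tree_arcs c (g = Alpha) 1 s"
proof -
  have "\<not> span_coloured c (g = Alpha) s" using assms by (cases c; cases g) auto
  then show ?thesis using tree_arcs_change_rg[of c "g = Alpha" 1 s False] by (simp add: add.commute)
qed

lemma base_face_tree_bnc:
  assumes "s = Node g l r"
  shows "base_face (tree_bnc s) = top_splits (g = Alpha) 1 s"
proof -
  have "blue (tree_bnc s) \<union> red (tree_bnc s) - {(1, bsize (tree_bnc s) + 1)} = visible_arcs (g = Alpha) 1 s"
    using tree_arcs_without_base[OF assms] by (auto simp: tree_bnc_def visible_arcs_def)
  then show ?thesis
    using not_covered_iff_top_split[of 1 _ s "g = Alpha"] top_splits_bounds[of _ "g = Alpha" 1 s]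
    by (auto simp: base_face_def tree_bnc_def)
qed

lemma face_blue_start_tree_bnc:
  assumes "s = Node g l r"
  shows "face_blue_start (tree_bnc s) v \<longleftrightarrow>
    v \<in> top_splits (g = Alpha) 1 s \<and> v \<in> blue_starts (g = Alpha) 1 s"
proof -
  have "(v, w) \<in> blue (tree_bnc s) \<longleftrightarrow> (v, w) \<in> tree_arcs Blue (g = Alpha) 1 s"
    if "v \<in> top_splits (g = Alpha) 1 s" for w
    using top_splits_bounds[OF that] tree_arcs_without_base[OF assms, of Blue]
    by (auto simp: tree_bnc_def)
  then show ?thesis
    unfolding face_blue_start_def base_face_tree_bnc[OF assms] face_blue_arcs_starts[symmetric]
    by (auto simp: face_blue_arcs_def tree_bnc_def add.commute image_iff)
qed

lemma root_split_tree_bnc: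
  assumes "normal (Node g l r)"
  shows "root_split (tree_bnc (Node g l r)) = 1 + arity l"
proof -
  define s where "s = Node g l r"
  define k where "k = 1 + arity l"
  let ?Tl = "top_splits False 1 l" and ?Tr = "top_splits (g = Gamma) k r"
  let ?Br = "blue_starts (g = Gamma) k r"
  have T: "top_splits (g = Alpha) 1 s = ?Tl \<union> {k} \<union> ?Tr" by (simp add: s_def k_def)
  have Tl: "v \<in> ?Tl \<Longrightarrow> 1 < v \<and> v < k" for v using top_splits_bounds[of v False 1 l] k_def by simp
  have Tr: "v \<in> ?Tr \<Longrightarrow> k < v" for v using top_splits_bounds by blast
  have "1 < k" using arity_ge_1[of l] k_def by simp
  with Tl Tr have not1: "1 \<notin> top_splits (g = Alpha) 1 s" unfolding T by fastforce
  have Br: "?Br \<subseteq> insert k ?Tr" by (rule blue_starts_subset)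
  have "blue_starts False 1 l \<subseteq> {1}" using blue_starts_normal assms by simp
  then have "blue_starts (g = Alpha) 1 s \<subseteq> insert 1 ?Br" "?Br \<subseteq> blue_starts (g = Alpha) 1 s"
    by (auto simp: s_def k_def)
  with Br not1 have start: "face_blue_start (tree_bnc s) v \<longleftrightarrow> v \<in> ?Br" for v
    unfolding face_blue_start_tree_bnc[OF s_def] unfolding T by blast
  show ?thesis
  proof (cases "k \<in> ?Br")
    case True
    then have "\<exists>v. face_blue_start (tree_bnc s) v" using start by blast
    moreover have "(LEAST v. face_blue_start (tree_bnc s) v) = k"
    proof (rule Least_equality)
      show "face_blue_start (tree_bnc s) k" using True start by blast
      show "k \<le> v" if "face_blue_start (tree_bnc s) v" for v
        using that start Br Tr by fastforce
    qed
    ultimately have "root_split (tree_bnc s) = k" unfolding root_split_def by simp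
    then show ?thesis by (simp add: s_def k_def)
  next
    case False
    then have "?Tr = {}" using blue_starts_if_top_splits by blast
    with False Br have "\<not> (\<exists>v. face_blue_start (tree_bnc s) v)" using start by blast
    then have "root_split (tree_bnc s) = Max (base_face (tree_bnc s))"
      unfolding root_split_def by (rule if_not_P)
    also have "\<dots> = k"
      using Tl finite_top_splits \<open>?Tr = {}\<close> unfolding base_face_tree_bnc[OF s_def] T
      by (intro Max_eqI) (auto, fastforce)
    finally show ?thesis by (simp add: s_def k_def)
  qed
qed

lemma tree_bnc_eq_iff:
  "tree_bnc s = tree_bnc t \<longleftrightarrow>
    arity s = arity t \<and> (\<forall>c. tree_arcs c False 1 s = tree_arcs c False 1 t)"
proof -
  have "(\<forall>c. P c) \<longleftrightarrow> P Blue \<and> P Red" for P by (metis colour.exhaust)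
  then show ?thesis by (auto simp: tree_bnc_def)
qed

lemma tree_arcs_Node_left:
  "{p \<in> tree_arcs c rg q (Node g l r). snd p \<le> q + arity l} = tree_arcs c False q l"
  using arity_ge_1[of r] tree_arcs_bounds[of _ _ c False q l] tree_arcs_bounds[of _ _ c "g = Gamma" "q + arity l" r]
  by auto fastforce+

lemma tree_arcs_Node_right:
  "{p \<in> tree_arcs c rg q (Node g l r). q + arity l \<le> fst p} = tree_arcs c (g = Gamma) (q + arity l) r"
  using arity_ge_1[of l] tree_arcs_bounds[of _ _ c False q l] tree_arcs_bounds[of _ _ c "g = Gamma" "q + arity l" r]
  by auto fastforce+

lemma tree_arcs_False_eqI:
  assumes "\<And>c. tree_arcs c rg q t = tree_arcs c rg q t'" "arity t = arity t'"
  shows "tree_arcs c False q t = tree_arcs c False q t'"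
proof -
  let ?c = "if rg then Red else Blue"
  have "gamma_rooted t = gamma_rooted t'"
    using span_in_tree_arcs_iff[of q t ?c rg] span_in_tree_arcs_iff[of q t' ?c rg] assms by (cases rg) auto
  then show ?thesis
    using tree_arcs_change_rg[of c False q t rg] tree_arcs_change_rg[of c False q t' rg] assms
    by (cases c) auto
qed

lemma tree_bnc_Node_eqD:
  assumes "normal (Node g l r)" "normal (Node g' l' r')"
    and eq: "tree_bnc (Node g l r) = tree_bnc (Node g' l' r')"
  shows "g = g' \<and> tree_bnc l = tree_bnc l' \<and> tree_bnc r = tree_bnc r'"
proof -
  let ?s = "Node g l r" and ?s' = "Node g' l' r'"
  have arcs: "tree_arcs c False 1 ?s = tree_arcs c False 1 ?s'" for c
    using eq tree_bnc_eq_iff by blast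
  have l: "arity l = arity l'" using root_split_tree_bnc[OF assms(1)] root_split_tree_bnc[OF assms(2)] eq by simp
  moreover have r: "arity r = arity r'" using eq l by (simp add: tree_bnc_def)
  moreover have "g = g'"
    using arcs[of Blue] span_in_tree_arcs_iff[of 1 ?s Blue False] span_in_tree_arcs_iff[of 1 ?s' Blue False] l r
    by (cases g; cases g') auto
  moreover have "tree_arcs c False 1 l = tree_arcs c False 1 l'" for c
  proof -
    have "tree_arcs c False 1 l = {p \<in> tree_arcs c False 1 ?s. snd p \<le> 1 + arity l}"
      by (rule tree_arcs_Node_left[symmetric])
    also have "\<dots> = {p \<in> tree_arcs c False 1 ?s'. snd p \<le> 1 + arity l'}"
      by (simp only: arcs l)
    finally show ?thesis by (simp only: tree_arcs_Node_left)
  qed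
  moreover have "tree_arcs c False 1 r = tree_arcs c False 1 r'" for c
  proof (rule tree_arcs_False_eqI[OF _ r])
    fix c
    have "shift_arc (arity l) ` tree_arcs c (g = Gamma) 1 r = tree_arcs c (g = Gamma) (1 + arity l) r"
      by (simp only: tree_arcs_shift)
    also have "\<dots> = {p \<in> tree_arcs c False 1 ?s. 1 + arity l \<le> fst p}"
      by (rule tree_arcs_Node_right[symmetric])
    also have "\<dots> = {p \<in> tree_arcs c False 1 ?s'. 1 + arity l' \<le> fst p}"
      by (simp only: arcs l)
    also have "\<dots> = shift_arc (arity l) ` tree_arcs c (g = Gamma) 1 r'"
      by (simp only: tree_arcs_Node_right tree_arcs_shift l \<open>g = g'\<close>)
    finally show "tree_arcs c (g = Gamma) 1 r = tree_arcs c (g = Gamma) 1 r'"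
      using inj_shift_arc by (simp add: inj_image_eq_iff)
  qed
  ultimately show ?thesis by (simp add: tree_bnc_eq_iff)
qed

lemma tree_bnc_inj_normal:
  assumes "normal s" "normal t" "tree_bnc s = tree_bnc t"
  shows "s = t"
  using assms
proof (induction s arbitrary: t)
  case Leaf
  then have "arity t = 1" by (simp add: tree_bnc_eq_iff)
  then show ?case by (metis arity_eq_1_iff)
next
  case (Node g l r)
  then have "arity t = arity (Node g l r)" by (simp add: tree_bnc_def)
  then obtain g' l' r' where t: "t = Node g' l' r'" by (metis arity_eq_1_iff ftree.exhaust)
  then have "g = g' \<and> tree_bnc l = tree_bnc l' \<and> tree_bnc r = tree_bnc r'"
    using Node.prems by (intro tree_bnc_Node_eqD) simp_all
  with Node.IH Node.prems t show ?case by simp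
qed

lemma eval_eq_iff_fcong: "eval s = eval t \<longleftrightarrow> fcong s t"
proof
  assume eq: "eval s = eval t"
  obtain ns nt where ns: "normal ns" "fcong s ns" and nt: "normal nt" "fcong t nt"
    using normal_form by blast
  have "tree_bnc ns = tree_bnc nt"
    using eq eval_eq_if_fcong[OF ns(2)] eval_eq_if_fcong[OF nt(2)] by (simp add: eval_eq_tree_bnc)
  then have "ns = nt" by (rule tree_bnc_inj_normal[OF ns(1) nt(1)])
  then show "fcong s t" using ns(2) nt(2) fcong.sym fcong.trans by metis
qed (rule eval_eq_if_fcong)

theorem theorem3p9:
  shows "(\<forall>s i t. 1 \<le> i \<longrightarrow> i \<le> arity s \<longrightarrow> eval (graft s i t) = bnc_comp (eval s) i (eval t))
       \<and> range eval = subop_ac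
       \<and> (\<forall>s t. eval s = eval t \<longleftrightarrow> fcong s t)"
  by (intro conjI allI impI eval_graft range_eval eval_eq_iff_fcong)

end
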